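(* Let $F_{i,l}(x)$, for integers $i\ge0$ and $-1\le l\le i+1$, be the polynomials defined recursively by $F_{0,0}(x)=1$, $F_{i,-1}(x)=F_{i,i+1}(x)=0$, and $$F_{i+1,l}(x)=F_{i,l-1}(x)-(2i+1-l)\,x\,F_{i,l}(x)+(x^2-4)F'_{i,l}(x)\quad(0\le l\le i+1).$$ Then (1) $F_{i,i}(x)=1$ for all $i\ge0$; (2) for each $k\ge0$, $F_{i+k,i}(x)$ has degree $k$ for every $i\ge0$; (3) $F_{i+1,i}(x)=-x\binom{i+2}{2}$ for all $i\ge0$.
   Context: $F'_{i,l}$ denotes the derivative of $F_{i,l}$ with respect to $x$. *)

theory Defs
  imports "HOL-Computational_Algebra.Polynomial"
begin

text \<open>F i l for i \<ge> 0 and -1 \<le> l \<le> i+1; values outside this range are set to 0,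
  which in particular gives F i (-1) = F i (i+1) = 0.\<close>
fun F :: "nat \<Rightarrow> int \<Rightarrow> int poly" where
  "F 0 l = (if l = 0 then 1 else 0)"
| "F (Suc i) l =
     (if 0 \<le> l \<and> l \<le> int i + 1 then
        F i (l - 1) - smult (2 * int i + 1 - l) ([:0, 1:] * F i l)
          + [:-4, 0, 1:] * pderiv (F i l)
      else 0)"

end

theory Submission
  imports Defs "HOL-Combinatorics.Stirling"
begin

(* The coefficient of x^j in F n l vanishes unless j <= n - l and j = n - l (mod 2), since each
   term of the recurrence preserves both properties. At the new top degree j = n + 1 - l the terms
   x F and x^2 F' of the recurrence together contribute (j - 1) - (2n + 1 - l) = -(n + 1) times
   the previous top coefficient, so (-1)^(n-l) times the top coefficient of F n l obeys the
   recurrence of the unsigned Stirling numbers of the first kind and equals [n+1, l+1] > 0.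
   The values [i+1, i+1] = 1 and [i+2, i+1] = C(i+2, 2), together with the parity constraint,
   then determine F i i and F (i+1) i. *)

lemma coeff_quadratic_mult_pderiv:
  fixes p :: "'a::idom poly"
  shows "coeff ([:- c, 0, 1:] * pderiv p) j =
    (if j = 0 then 0 else of_nat (j - 1) * coeff p (j - 1)) - c * of_nat (Suc j) * coeff p (Suc j)"
proof -
  have "[:- c, 0, 1:] * pderiv p = monom 1 2 * pderiv p - smult c (pderiv p)"
    by (simp add: monom_altdef algebra_simps power2_eq_square)
  moreover have "coeff (monom 1 2 * pderiv p) j =
      (if j = 0 then 0 else of_nat (j - 1) * coeff p (j - 1))"
    by (cases j) (auto simp: coeff_monom_mult coeff_pderiv numeral_2_eq_2)
  ultimately show ?thesis
    by (simp add: coeff_pderiv)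
qed

lemma F_eq_0_out_of_range: "l < 0 \<or> int n < l \<Longrightarrow> F n l = 0"
  by (cases n) auto

declare F.simps(2)[simp del]

lemma coeff_F_Suc:
  assumes "0 \<le> l" "l \<le> int n + 1"
  shows "coeff (F (Suc n) l) j =
    coeff (F n (l - 1)) j
    + (if j = 0 then 0 else (int j - 1 - (2 * int n + 1 - l)) * coeff (F n l) (j - 1))
    - 4 * (int j + 1) * coeff (F n l) (Suc j)"
proof -
  let ?p = "F n l"
  have "coeff (F (Suc n) l) j = coeff (F n (l - 1)) j - (2 * int n + 1 - l) * coeff ([:0, 1:] * ?p) j
      + coeff ([:- 4, 0, 1:] * pderiv ?p) j"
    using assms by (simp only: F.simps(2) simp_thms if_True coeff_add coeff_diff coeff_smult)
  then show ?thesis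
    unfolding coeff_quadratic_mult_pderiv
    by (cases j) (simp_all add: coeff_pCons' algebra_simps)
qed

lemma coeff_F_eq_0_above: "int n < int j + l \<Longrightarrow> coeff (F n l) j = 0"
proof (induction n arbitrary: l j)
  case 0
  then show ?case by (cases j) auto
next
  case (Suc n)
  show ?case
  proof (cases "0 \<le> l \<and> l \<le> int n + 1")
    case True
    have "coeff (F n (l - 1)) j = 0" "coeff (F n l) (Suc j) = 0"
      using Suc by (simp_all add: of_nat_diff)
    moreover have "coeff (F n l) (j - 1) = 0" if "j \<noteq> 0"
      using Suc that by (simp add: of_nat_diff)
    ultimately show ?thesis
      using True by (simp add: coeff_F_Suc)
  qed (use F_eq_0_out_of_range[of l "Suc n"] in auto)
qed

lemma coeff_F_eq_0_odd: "odd (int n - l - int j) \<Longrightarrow> coeff (F n l) j = 0"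
proof (induction n arbitrary: l j)
  case 0
  then show ?case by (cases j) auto
next
  case (Suc n)
  show ?case
  proof (cases "0 \<le> l \<and> l \<le> int n + 1")
    case True
    have "coeff (F n (l - 1)) j = 0" "coeff (F n l) (Suc j) = 0"
      using Suc.prems Suc.IH[of "l - 1" j] Suc.IH[of l "Suc j"] by (simp_all add: algebra_simps)
    moreover have "coeff (F n l) (j - 1) = 0" if "j \<noteq> 0"
      using Suc.prems Suc.IH[of l "j - 1"] that by (auto simp: of_nat_diff)
    ultimately show ?thesis
      using True by (simp add: coeff_F_Suc)
  qed (use F_eq_0_out_of_range[of l "Suc n"] in auto)
qed

lemma stirling_Suc_Suc_pos: "k \<le> n \<Longrightarrow> 0 < stirling (Suc n) (Suc k)"
proof (induction n arbitrary: k)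
  case 0
  then show ?case by simp
next
  case (Suc n)
  then show ?case by (cases k) auto
qed

lemma coeff_F_top_eq_stirling:
  "i \<le> n \<Longrightarrow> coeff (F n (int i)) (n - i) = (-1) ^ (n - i) * int (stirling (Suc n) (Suc i))"
proof (induction n arbitrary: i)
  case 0
  then show ?case by simp
next
  case (Suc n)
  define k where "k = Suc n - i"
  have pred_term: "coeff (F n (int i - 1)) k = (-1) ^ k * int (stirling (Suc n) i)"
  proof (cases i)
    case 0
    then show ?thesis by (simp add: F_eq_0_out_of_range)
  next
    case (Suc i')
    then show ?thesis using Suc.IH[of i'] Suc.prems by (simp add: k_def)
  qed
  have same_term: "(if k = 0 then 0 else (int k - 1 - (2 * int n + 1 - int i)) * coeff (F n (int i)) (k - 1))
      = (-1) ^ k * ((int n + 1) * int (stirling (Suc n) (Suc i)))"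
  proof (cases "i = Suc n")
    case True
    then show ?thesis by (simp add: k_def)
  next
    case False
    then have "i \<le> n" "k = Suc (n - i)"
      using Suc.prems by (simp_all add: k_def)
    then show ?thesis using Suc.IH[of i] by (simp add: of_nat_diff algebra_simps)
  qed
  have above: "coeff (F n (int i)) (Suc k) = 0"
    by (rule coeff_F_eq_0_above) (use Suc.prems in \<open>simp add: k_def\<close>)
  have "coeff (F (Suc n) (int i)) k = coeff (F n (int i - 1)) k
      + (if k = 0 then 0 else (int k - 1 - (2 * int n + 1 - int i)) * coeff (F n (int i)) (k - 1))
      - 4 * (int k + 1) * coeff (F n (int i)) (Suc k)"
    by (rule coeff_F_Suc) (use Suc.prems in auto)
  also have "\<dots> = (-1) ^ k * (int (stirling (Suc n) i) + (int n + 1) * int (stirling (Suc n) (Suc i)))"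
    unfolding pred_term same_term above by (simp add: algebra_simps del: stirling.simps)
  also have "\<dots> = (-1) ^ k * int (stirling (Suc (Suc n)) (Suc i))"
    by (simp add: algebra_simps)
  finally show ?case
    by (simp add: k_def)
qed

lemma degree_F: "degree (F (i + k) (int i)) = k"
proof (rule antisym)
  show "degree (F (i + k) (int i)) \<le> k"
    by (rule degree_le) (auto intro: coeff_F_eq_0_above)
  have "coeff (F (i + k) (int i)) k \<noteq> 0"
    using coeff_F_top_eq_stirling[of i "i + k"] stirling_Suc_Suc_pos[of i "i + k"]
    by (simp del: stirling.simps)
  then show "k \<le> degree (F (i + k) (int i))"
    by (rule le_degree)
qed

lemma F_diagonal: "F i (int i) = 1"
proof (rule poly_eqI)
  fix j
  show "coeff (F i (int i)) j = coeff 1 j"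
    using coeff_F_top_eq_stirling[of i i] coeff_F_eq_0_above[of i j "int i"] by (cases j) simp_all
qed

lemma F_subdiagonal: "F (i + 1) (int i) = - (smult (of_nat ((i + 2) choose 2)) [:0, 1:])"
proof (rule poly_eqI)
  fix j
  consider "j = 0" | "j = 1" | "2 \<le> (j::nat)"
    by linarith
  then show "coeff (F (i + 1) (int i)) j = coeff (- (smult (of_nat ((i + 2) choose 2)) [:0, 1:])) j"
  proof cases
    case 1
    then show ?thesis by (simp add: coeff_F_eq_0_odd)
  next
    case 2
    then show ?thesis using coeff_F_top_eq_stirling[of i "i + 1"] by (simp add: stirling_Suc_n_n)
  next
    case 3
    then show ?thesis by (simp add: coeff_F_eq_0_above coeff_pCons')
  qed
qed

theorem lemma6p3:
  shows "(\<forall>i::nat. F i (int i) = 1)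
       \<and> (\<forall>k i::nat. degree (F (i + k) (int i)) = k)
       \<and> (\<forall>i::nat. F (i + 1) (int i) = - (smult (of_nat ((i + 2) choose 2)) [:0, 1:]))"
  using F_diagonal degree_F F_subdiagonal by blast

end
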